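(* (a) If $n\ge 1$, $\mathcal{P}=C_n$ and $L=\mathfrak{g}^{\prec}(\mathcal{P})$, then $b(L)=|Rel_{\overline{C}}(\mathcal{P})|=\frac{(n-1)(n-2)}{2}$. (b) If $n\ge 1$, $\mathcal{P}=\mathbf{2\times n}$ and $L=\mathfrak{g}^{\prec}(\mathcal{P})$, then $b(L)=|Rel_{\overline{C}}(\mathcal{P})|=\frac{(n-1)(3n-4)}{2}$. (c) If $m\ge 2$, $n\ge 1$, $\mathcal{P}=T_m(n)$ and $L=\mathfrak{g}^{\prec}(\mathcal{P})$, then $b(L)=|Rel_{\overline{C}}(\mathcal{P})|=\frac{(n-2)m^{n+1}+(1-n)m^n+m^2}{(m-1)^2}$.
   Context: All Lie algebras are over an algebraically closed field $\mathbf{k}$ of characteristic zero. For a finite poset $\mathcal{P}$, write $x\prec y$ for strict relations; a strict relation $p\prec q$ is covering if there is no $z$ with $p\prec z\prec q$, and $Rel_{\overline{C}}(\mathcal{P})$ is the set of non-covering strict relations. The nilpotent Lie poset algebra $\mathfrak{g}^{\prec}(\mathcal{P})$ is the Lie algebra (under the commutator bracket) of $|\mathcal{P}|\times|\mathcal{P}|$ matrices spanned by the matrix units $E_{p,q}$ with $p\prec q$ (rows and columns indexed by $\mathcal{P}$). The breadth of a Lie algebra $L$ is $b(L)=\max_{x\in L}\operatorname{rank}(\mathrm{ad}_x)$, where $\mathrm{ad}_x=[x,-]$. Posets: $C_n$ is the chain $1\prec 2\prec\cdots\prec n$. $\mathbf{2\times n}$ is the poset on $\{i_j : 1\le i\le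 n,\ 1\le j\le 2\}$ with $i_j\preceq i'_{j'}$ iff $i\le i'$ and $j\le j'$ (product of a 2-chain and an $n$-chain; covering relations $i_j\prec (i+1)_j$ and $i_1\prec i_2$). $T_m(n)$ (for $m\ge 2$) is the rooted complete $m$-ary tree of depth $n$: the poset on $\{i_k : 1\le k\le n,\ 1\le i\le m^{k-1}\}$ whose covering relations are $i_k\prec j_{k+1}$ for $1\le k<n$, $1\le i\le m^{k-1}$ and $m(i-1)+1\le j\le mi$, with the order being the transitive closure of these. *)

theory Defs
  imports Main "HOL-Library.Function_Algebras" "HOL-Computational_Algebra.Polynomial"
begin

definition alg_closed :: "'k::field itself \<Rightarrow> bool" where
  "alg_closed _ \<longleftrightarrow> (\<forall>p::'k poly. degree p > 0 \<longrightarrow> (\<exists>x. poly p x = 0))"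

text \<open>Matrices with rows/columns indexed by a poset carrier P are functions
  'a => 'a => 'k vanishing outside P x P.  Scalar multiplication:\<close>
definition mscale :: "'k::field \<Rightarrow> ('a \<Rightarrow> 'a \<Rightarrow> 'k) \<Rightarrow> ('a \<Rightarrow> 'a \<Rightarrow> 'k)" where
  "mscale c A = (\<lambda>i j. c * A i j)"

definition mbracket :: "'a set \<Rightarrow> ('a \<Rightarrow> 'a \<Rightarrow> 'k::field) \<Rightarrow> ('a \<Rightarrow> 'a \<Rightarrow> 'k) \<Rightarrow> ('a \<Rightarrow> 'a \<Rightarrow> 'k)" where
  "mbracket P A B = (\<lambda>i j. (\<Sum>k\<in>P. A i k * B k j) - (\<Sum>k\<in>P. B i k * A k j))"

definition lie_poset_alg :: "'k::field itself \<Rightarrow> 'a set \<Rightarrow> ('a \<Rightarrow> 'a \<Rightarrow> bool) \<Rightarrow> ('a \<Rightarrow> 'a \<Rightarrow> 'k) set" where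
  "lie_poset_alg _ P lt = {A. \<forall>i j. A i j \<noteq> 0 \<longrightarrow> i \<in> P \<and> j \<in> P \<and> lt i j}"

definition rank_ad :: "'a set \<Rightarrow> ('a \<Rightarrow> 'a \<Rightarrow> bool) \<Rightarrow> ('a \<Rightarrow> 'a \<Rightarrow> 'k::field) \<Rightarrow> nat" where
  "rank_ad P lt x = vector_space.dim mscale ((\<lambda>y. mbracket P x y) ` lie_poset_alg TYPE('k) P lt)"

definition breadth :: "'k::field itself \<Rightarrow> 'a set \<Rightarrow> ('a \<Rightarrow> 'a \<Rightarrow> bool) \<Rightarrow> nat" where
  "breadth T P lt = Max {rank_ad P lt x | x. x \<in> lie_poset_alg T P lt}"

definition noncov_rel :: "'a set \<Rightarrow> ('a \<Rightarrow> 'a \<Rightarrow> bool) \<Rightarrow> ('a \<times> 'a) set" where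
  "noncov_rel P lt = {(p, q). p \<in> P \<and> q \<in> P \<and> lt p q \<and> (\<exists>z\<in>P. lt p z \<and> lt z q)}"

definition chain_set :: "nat \<Rightarrow> nat set" where "chain_set n = {1..n}"
definition chain_lt :: "nat \<Rightarrow> nat \<Rightarrow> bool" where "chain_lt i j \<longleftrightarrow> i < j"

text \<open>2 x n: element i_j is the pair (i, j).\<close>
definition twon_set :: "nat \<Rightarrow> (nat \<times> nat) set" where
  "twon_set n = {(i, j). 1 \<le> i \<and> i \<le> n \<and> 1 \<le> j \<and> j \<le> 2}"
definition twon_lt :: "nat \<times> nat \<Rightarrow> nat \<times> nat \<Rightarrow> bool" where
  "twon_lt x y \<longleftrightarrow> fst x \<le> fst y \<and> snd x \<le> snd y \<and> x \<noteq> y"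

text \<open>T_m(n): element i_k is the pair (i, k); order = transitive closure of coverings.\<close>
definition tree_set :: "nat \<Rightarrow> nat \<Rightarrow> (nat \<times> nat) set" where
  "tree_set m n = {(i, k). 1 \<le> k \<and> k \<le> n \<and> 1 \<le> i \<and> i \<le> m ^ (k - 1)}"
definition tree_cover :: "nat \<Rightarrow> nat \<Rightarrow> ((nat \<times> nat) \<times> (nat \<times> nat)) set" where
  "tree_cover m n = {((i, k), (j, k + 1)) | i j k. 1 \<le> k \<and> k < n \<and> 1 \<le> i \<and> i \<le> m ^ (k - 1)
                      \<and> m * (i - 1) + 1 \<le> j \<and> j \<le> m * i}"
definition tree_lt :: "nat \<Rightarrow> nat \<Rightarrow> nat \<times> nat \<Rightarrow> nat \<times> nat \<Rightarrow> bool" where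
  "tree_lt m n x y \<longleftrightarrow> (x, y) \<in> (tree_cover m n)\<^sup>+"

end

theory Submission
  imports Defs
begin

text \<open>Let x be the sum of the matrix units E_{p,q} over the covering relations of P.
  A product E_{p,z} E_{z,q} is nonzero only if p \<prec> z \<prec> q, so every bracket of two elements
  of L is supported on the non-covering relations and rank ad_y \<le> |Rel_C(P)| for all y.
  Conversely, [x, E_{a,q}] is the sum of the E_{c,q} over the lower covers c of a minus the sum
  of the E_{a,d} over the upper covers d of q.  For non-covering p \<prec> q pick an a covering p with
  a \<prec> q; then E_{p,q} lies in [x, L] modulo units that are smaller for a suitable measure, so
  by induction [x, L] spans all E_{p,q} with (p, q) non-covering and ad_x attains the bound.
  For chains and trees the measure is the level of q; for 2 x n it is the rank of q, with ties
  broken by the row of p.  The cardinalities follow from recursions in n.\<close>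

section \<open>Breadth of Lie poset algebras\<close>

interpretation matrix: vector_space "mscale :: 'k::field \<Rightarrow> ('a \<Rightarrow> 'a \<Rightarrow> 'k) \<Rightarrow> _"
  by unfold_locales (auto simp: mscale_def fun_eq_iff algebra_simps)

definition matrix_unit :: "'a \<times> 'a \<Rightarrow> 'a \<Rightarrow> 'a \<Rightarrow> 'k::field" where
  "matrix_unit s = (\<lambda>i j. if i = fst s \<and> j = snd s then 1 else 0)"

definition covers :: "'a set \<Rightarrow> ('a \<Rightarrow> 'a \<Rightarrow> bool) \<Rightarrow> 'a \<Rightarrow> 'a \<Rightarrow> bool" where
  "covers P lt u v \<longleftrightarrow> u \<in> P \<and> v \<in> P \<and> lt u v \<and> \<not> (\<exists>z\<in>P. lt u z \<and> lt z v)"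

definition cover_sum :: "'a set \<Rightarrow> ('a \<Rightarrow> 'a \<Rightarrow> bool) \<Rightarrow> 'a \<Rightarrow> 'a \<Rightarrow> 'k::field" where
  "cover_sum P lt = (\<lambda>i j. if covers P lt i j then 1 else 0)"

lemma sum_fun_apply2: "(sum f A) i j = (\<Sum>x\<in>A. f x i j)"
  by (induction A rule: infinite_finite_induct) auto

lemma matrix_unit_eq_iff [simp]:
  "(matrix_unit s :: 'a \<Rightarrow> 'a \<Rightarrow> 'k::field) = matrix_unit t \<longleftrightarrow> s = t"
  by (auto simp: matrix_unit_def fun_eq_iff prod_eq_iff)

lemma card_matrix_units: "card (matrix_unit ` S :: ('a \<Rightarrow> 'a \<Rightarrow> 'k::field) set) = card S"
  by (rule card_image) (simp add: inj_on_def)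

lemma matrix_independent_units:
  "matrix.independent (matrix_unit ` S :: ('a \<Rightarrow> 'a \<Rightarrow> 'k::field) set)"
  unfolding matrix.independent_explicit_module
proof (intro allI impI)
  fix W u v
  assume W: "finite W" "W \<subseteq> matrix_unit ` S" "(\<Sum>w\<in>W. mscale (u w) w) = 0" "v \<in> W"
  then obtain s where v: "v = matrix_unit s" by auto
  have "0 = (\<Sum>w\<in>W. mscale (u w) w) (fst s) (snd s)" using W by simp
  also have "\<dots> = (\<Sum>w\<in>W. if w = v then u v else 0)"
    unfolding sum_fun_apply2
  proof (rule sum.cong)
    fix w assume "w \<in> W"
    then obtain t where w: "w = matrix_unit t" using W by auto
    then have "w = v \<longleftrightarrow> t = s" using v by simp
    then show "mscale (u w) w (fst s) (snd s) = (if w = v then u v else 0)"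
      using v w by (auto simp: mscale_def matrix_unit_def prod_eq_iff)
  qed simp
  also have "\<dots> = u v" using W by simp
  finally show "u v = 0" by simp
qed

lemma matrix_in_span_units:
  fixes A :: "'a \<Rightarrow> 'a \<Rightarrow> 'k::field"
  assumes "finite S" and supp: "\<And>i j. A i j \<noteq> 0 \<Longrightarrow> (i, j) \<in> S"
  shows "A \<in> matrix.span (matrix_unit ` S)"
proof -
  have "A = (\<Sum>s\<in>S. mscale (A (fst s) (snd s)) (matrix_unit s))"
  proof (intro ext)
    fix i j
    have "(\<Sum>s\<in>S. mscale (A (fst s) (snd s)) (matrix_unit s)) i j
        = (\<Sum>s\<in>S. if s = (i, j) then A i j else 0)"
      unfolding sum_fun_apply2 by (rule sum.cong) (auto simp: mscale_def matrix_unit_def)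
    also have "\<dots> = A i j" using assms by auto
    finally show "A i j = (\<Sum>s\<in>S. mscale (A (fst s) (snd s)) (matrix_unit s)) i j" by simp
  qed
  also have "\<dots> \<in> matrix.span (matrix_unit ` S)"
    by (intro matrix.span_sum matrix.span_scale matrix.span_base) auto
  finally show ?thesis .
qed

lemma finite_noncov_rel: "finite P \<Longrightarrow> finite (noncov_rel P lt)"
  by (rule finite_subset[of _ "P \<times> P"]) (auto simp: noncov_rel_def)

lemma mbracket_support_noncov_rel:
  assumes "transp_on P lt"
    and "x \<in> lie_poset_alg TYPE('k::field) P lt" "y \<in> lie_poset_alg TYPE('k) P lt"
    and "mbracket P x y i j \<noteq> 0"
  shows "(i, j) \<in> noncov_rel P lt"
proof -
  obtain k where "k \<in> P" "x i k * y k j \<noteq> 0 \<or> y i k * x k j \<noteq> 0"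
    using assms(4) unfolding mbracket_def by (metis (mono_tags, lifting) diff_self sum.neutral)
  then have "i \<in> P" "j \<in> P" "lt i k" "lt k j"
    using assms(2,3) unfolding lie_poset_alg_def by auto
  then show ?thesis
    using assms(1) \<open>k \<in> P\<close> unfolding noncov_rel_def transp_on_def by blast
qed

lemma rank_ad_le_card_noncov_rel:
  assumes "finite P" "transp_on P lt" "x \<in> lie_poset_alg TYPE('k::field) P lt"
  shows "rank_ad P lt x \<le> card (noncov_rel P lt)"
proof -
  let ?B = "matrix_unit ` noncov_rel P lt :: ('a \<Rightarrow> 'a \<Rightarrow> 'k) set"
  have "(\<lambda>y. mbracket P x y) ` lie_poset_alg TYPE('k) P lt \<subseteq> matrix.span ?B"
    using mbracket_support_noncov_rel[OF assms(2,3)]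
      matrix_in_span_units[OF finite_noncov_rel[OF assms(1)]] by blast
  then have "rank_ad P lt x \<le> card ?B"
    unfolding rank_ad_def using assms(1) by (intro matrix.dim_le_card) (auto simp: finite_noncov_rel)
  then show ?thesis by (simp add: card_matrix_units)
qed

lemma mbracket_cover_sum_matrix_unit:
  assumes "finite P" "a \<in> P" "b \<in> P"
  shows "mbracket P (cover_sum P lt) (matrix_unit (a, b)) i j
     = (if j = b \<and> covers P lt i a then 1 else 0) - (if i = a \<and> covers P lt b j then 1 else (0::'k::field))"
proof -
  let ?x = "cover_sum P lt :: 'a \<Rightarrow> 'a \<Rightarrow> 'k"
  have "(\<Sum>k\<in>P. ?x i k * matrix_unit (a, b) k j) = (\<Sum>k\<in>P. if k = a then (if j = b then ?x i a else 0) else 0)"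
    by (rule sum.cong) (auto simp: matrix_unit_def)
  moreover have "(\<Sum>k\<in>P. matrix_unit (a, b) i k * ?x k j) = (\<Sum>k\<in>P. if k = b then (if i = a then ?x b j else 0) else 0)"
    by (rule sum.cong) (auto simp: matrix_unit_def)
  ultimately show ?thesis
    unfolding mbracket_def using assms by (simp add: cover_sum_def)
qed

lemma sum_matrix_units_column:
  "finite C \<Longrightarrow> (\<Sum>c\<in>C. matrix_unit (c, q)) i j = (if i \<in> C \<and> j = q then 1 else (0::'k::field))"
  by (cases "j = q") (auto simp: sum_fun_apply2 matrix_unit_def)

lemma sum_matrix_units_row:
  "finite D \<Longrightarrow> (\<Sum>d\<in>D. matrix_unit (a, d)) i j = (if i = a \<and> j \<in> D then 1 else (0::'k::field))"
  by (cases "i = a") (auto simp: sum_fun_apply2 matrix_unit_def)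

lemma matrix_unit_eq_mbracket_cover_sum:
  assumes "finite P" "covers P lt p a" "q \<in> P"
  shows "(matrix_unit (p, q) :: 'a \<Rightarrow> 'a \<Rightarrow> 'k::field)
    = mbracket P (cover_sum P lt) (matrix_unit (a, q))
      - (\<Sum>c\<in>{c. covers P lt c a \<and> c \<noteq> p}. matrix_unit (c, q))
      + (\<Sum>d\<in>{d. covers P lt q d}. matrix_unit (a, d))"
proof (intro ext)
  fix i j
  have fin: "finite {c. covers P lt c a \<and> c \<noteq> p}" "finite {d. covers P lt q d}"
    using assms(1) by (auto intro: rev_finite_subset simp: covers_def)
  have "a \<in> P" using assms(2) by (simp add: covers_def)
  show "matrix_unit (p, q) i j = (mbracket P (cover_sum P lt) (matrix_unit (a, q))
      - (\<Sum>c\<in>{c. covers P lt c a \<and> c \<noteq> p}. matrix_unit (c, q))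
      + (\<Sum>d\<in>{d. covers P lt q d}. matrix_unit (a, d))) i j"
    using assms(2)
    unfolding plus_fun_apply minus_apply mbracket_cover_sum_matrix_unit[OF assms(1) \<open>a \<in> P\<close> assms(3)]
      sum_matrix_units_column[OF fin(1)] sum_matrix_units_row[OF fin(2)]
    by (auto simp: matrix_unit_def)
qed

text \<open>The measure f must decrease from (p, q) to every other unit occurring in
  [x, E_{a,q}]: the E_{c,q} for the other lower covers c of a and the E_{a,d}
  for the upper covers d of q.\<close>

definition cover_descent :: "'a set \<Rightarrow> ('a \<Rightarrow> 'a \<Rightarrow> bool) \<Rightarrow> ('a \<times> 'a \<Rightarrow> nat) \<Rightarrow> bool" where
  "cover_descent P lt f \<longleftrightarrow> (\<forall>p q. (p, q) \<in> noncov_rel P lt \<longrightarrow> (\<exists>a. covers P lt p a \<and> lt a q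
     \<and> (\<forall>c. covers P lt c a \<and> c \<noteq> p \<longrightarrow> f (c, q) < f (p, q))
     \<and> (\<forall>d. covers P lt q d \<longrightarrow> f (a, d) < f (p, q))))"

lemma cover_descent_unique_lower_cover:
  assumes "\<And>p q. (p, q) \<in> noncov_rel P lt \<Longrightarrow>
      \<exists>a. covers P lt p a \<and> lt a q \<and> (\<forall>c. covers P lt c a \<longrightarrow> c = p)"
    and "\<And>q d. covers P lt q d \<Longrightarrow> h q < h d \<and> h d \<le> N"
  shows "cover_descent P lt (\<lambda>(p, q). N - h q)"
proof -
  have "N - h d < N - h q" if "covers P lt q d" for q d
    using assms(2)[OF that] by linarith
  with assms(1) show ?thesis
    unfolding cover_descent_def by fastforce
qed

lemma cover_sum_in_lie_poset_alg: "cover_sum P lt \<in> lie_poset_alg TYPE('k::field) P lt"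
  by (auto simp: lie_poset_alg_def cover_sum_def covers_def)

lemma matrix_unit_in_span_ad_cover_sum:
  assumes fin: "finite P" and trans: "transp_on P lt" and descent: "cover_descent P lt f"
    and "s \<in> noncov_rel P lt"
  shows "matrix_unit s \<in> matrix.span
    ((\<lambda>y. mbracket P (cover_sum P lt) y) ` lie_poset_alg TYPE('k::field) P lt)"
  using assms(4)
proof (induction "f s" arbitrary: s rule: less_induct)
  case less
  let ?V = "matrix.span ((\<lambda>y. mbracket P (cover_sum P lt) y) ` lie_poset_alg TYPE('k) P lt)"
  obtain p q where s: "s = (p, q)" by fastforce
  with less.prems descent obtain a where a: "covers P lt p a" "lt a q"
    and lower: "\<And>c. covers P lt c a \<Longrightarrow> c \<noteq> p \<Longrightarrow> f (c, q) < f (p, q)"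
    and upper: "\<And>d. covers P lt q d \<Longrightarrow> f (a, d) < f (p, q)"
    unfolding cover_descent_def by blast
  have "q \<in> P" "a \<in> P" using less.prems a unfolding s noncov_rel_def covers_def by auto
  have "mbracket P (cover_sum P lt) (matrix_unit (a, q)) \<in> ?V"
    using \<open>a \<in> P\<close> \<open>q \<in> P\<close> a(2)
    by (intro matrix.span_base imageI) (auto simp: lie_poset_alg_def matrix_unit_def)
  moreover have "(\<Sum>c\<in>{c. covers P lt c a \<and> c \<noteq> p}. matrix_unit (c, q)) \<in> ?V"
  proof (rule matrix.span_sum)
    fix c assume c: "c \<in> {c. covers P lt c a \<and> c \<noteq> p}"
    then have "(c, q) \<in> noncov_rel P lt"
      using a trans \<open>a \<in> P\<close> \<open>q \<in> P\<close> unfolding noncov_rel_def covers_def transp_on_def by blast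
    then show "matrix_unit (c, q) \<in> ?V" using less.hyps lower c unfolding s by blast
  qed
  moreover have "(\<Sum>d\<in>{d. covers P lt q d}. matrix_unit (a, d)) \<in> ?V"
  proof (rule matrix.span_sum)
    fix d assume d: "d \<in> {d. covers P lt q d}"
    then have "(a, d) \<in> noncov_rel P lt"
      using a trans \<open>a \<in> P\<close> \<open>q \<in> P\<close> unfolding noncov_rel_def covers_def transp_on_def by blast
    then show "matrix_unit (a, d) \<in> ?V" using less.hyps upper d unfolding s by blast
  qed
  ultimately show ?case
    unfolding s matrix_unit_eq_mbracket_cover_sum[OF fin a(1) \<open>q \<in> P\<close>]
    by (intro matrix.span_add matrix.span_diff)
qed

lemma rank_ad_cover_sum:
  assumes "finite P" "transp_on P lt" "cover_descent P lt f"
  shows "rank_ad P lt (cover_sum P lt :: 'a \<Rightarrow> 'a \<Rightarrow> 'k::field) = card (noncov_rel P lt)"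
proof -
  let ?B = "matrix_unit ` noncov_rel P lt :: ('a \<Rightarrow> 'a \<Rightarrow> 'k) set"
  let ?I = "(\<lambda>y. mbracket P (cover_sum P lt) y) ` lie_poset_alg TYPE('k) P lt"
  have "?B \<subseteq> matrix.span ?I"
    using matrix_unit_in_span_ad_cover_sum[OF assms] by blast
  moreover have "?I \<subseteq> matrix.span ?B"
    using mbracket_support_noncov_rel[OF assms(2) cover_sum_in_lie_poset_alg]
      matrix_in_span_units[OF finite_noncov_rel[OF assms(1)]] by blast
  ultimately have "matrix.span ?B = matrix.span ?I"
    by (simp add: matrix.span_eq)
  then have "matrix.dim ?I = card ?B"
    by (rule matrix.dim_eq_card[OF _ matrix_independent_units])
  then show ?thesis by (simp add: rank_ad_def card_matrix_units)
qed

theorem breadth_eq_card_noncov_rel: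
  assumes "finite P" "transp_on P lt" "cover_descent P lt f"
  shows "breadth TYPE('k::field) P lt = card (noncov_rel P lt)"
  unfolding breadth_def
proof (rule Max_eqI)
  let ?L = "lie_poset_alg TYPE('k) P lt"
  show "finite {rank_ad P lt x |x. x \<in> ?L}"
    by (rule finite_subset[of _ "{..card (noncov_rel P lt)}"])
      (auto dest: rank_ad_le_card_noncov_rel[OF assms(1,2)])
  show "r \<le> card (noncov_rel P lt)" if "r \<in> {rank_ad P lt x |x. x \<in> ?L}" for r
    using that rank_ad_le_card_noncov_rel[OF assms(1,2)] by auto
  show "card (noncov_rel P lt) \<in> {rank_ad P lt x |x. x \<in> ?L}"
    using rank_ad_cover_sum[OF assms] cover_sum_in_lie_poset_alg by (metis (mono_tags, lifting) mem_Collect_eq)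
qed

section \<open>Chains\<close>

lemma chain_noncov_rel:
  "noncov_rel (chain_set n) chain_lt = {(p, q). 1 \<le> p \<and> p + 2 \<le> q \<and> q \<le> n}"
proof (rule set_eqI, clarify)
  fix p q :: nat
  show "(p, q) \<in> noncov_rel (chain_set n) chain_lt \<longleftrightarrow> (p, q) \<in> {(p, q). 1 \<le> p \<and> p + 2 \<le> q \<and> q \<le> n}"
    unfolding noncov_rel_def chain_set_def chain_lt_def by (auto intro!: bexI[of _ "Suc p"])
qed

lemma chain_covers_iff: "covers (chain_set n) chain_lt u v \<longleftrightarrow> 1 \<le> u \<and> v \<le> n \<and> v = Suc u"
proof
  assume cov: "covers (chain_set n) chain_lt u v"
  then have "1 \<le> u" "u < v" "v \<le> n" by (auto simp: covers_def chain_set_def chain_lt_def)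
  moreover have "\<not> Suc u < v"
    using cov \<open>1 \<le> u\<close> \<open>v \<le> n\<close> unfolding covers_def chain_set_def chain_lt_def by force
  ultimately show "1 \<le> u \<and> v \<le> n \<and> v = Suc u" by simp
qed (auto simp: covers_def chain_set_def chain_lt_def)

lemma chain_cover_descent: "cover_descent (chain_set n) chain_lt (\<lambda>(p, q). n - q)"
  by (auto simp: cover_descent_def chain_noncov_rel chain_covers_iff chain_lt_def)

lemma breadth_chain:
  "breadth TYPE('k::field) (chain_set n) chain_lt = card (noncov_rel (chain_set n) chain_lt)"
  by (rule breadth_eq_card_noncov_rel[OF _ _ chain_cover_descent])
    (auto simp: chain_set_def chain_lt_def transp_on_def)

lemma double_card_chain_noncov:
  "2 * card {(p, q). 1 \<le> p \<and> p + 2 \<le> q \<and> q \<le> n} = (n - 1) * (n - 2)"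
proof (induction n)
  case 0
  have empty: "{(p, q). 1 \<le> p \<and> p + 2 \<le> q \<and> q \<le> (0::nat)} = {}" by auto
  show ?case by (simp only: empty) simp
next
  case (Suc n)
  have new: "{(p, q). 1 \<le> p \<and> p + 2 \<le> q \<and> q \<le> Suc n}
      = {(p, q). 1 \<le> p \<and> p + 2 \<le> q \<and> q \<le> n} \<union> (\<lambda>p. (p, Suc n)) ` {1..n - 1}"
    by auto
  have "card ({(p, q). 1 \<le> p \<and> p + 2 \<le> q \<and> q \<le> n} \<union> (\<lambda>p. (p, Suc n)) ` {1..n - 1})
      = card {(p, q). 1 \<le> p \<and> p + 2 \<le> q \<and> q \<le> n} + (n - 1)"
    by (subst card_Un_disjoint)
      (auto intro: finite_subset[of _ "{..n} \<times> {..n}"] simp: card_image inj_on_def)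
  then show ?case unfolding new using Suc.IH by (cases n) (auto simp: algebra_simps)
qed

lemma card_chain_noncov_rel:
  assumes "n \<ge> 1"
  shows "real (card (noncov_rel (chain_set n) chain_lt)) = (real n - 1) * (real n - 2) / 2"
proof -
  have "real (2 * card (noncov_rel (chain_set n) chain_lt)) = real ((n - 1) * (n - 2))"
    by (simp only: chain_noncov_rel double_card_chain_noncov)
  then show ?thesis
    using assms by (cases "n = 1") (auto simp: of_nat_diff)
qed

section \<open>The poset 2 x n\<close>

definition twon_noncov :: "nat \<Rightarrow> ((nat \<times> nat) \<times> (nat \<times> nat)) set" where
  "twon_noncov n = {((a, b), (c, d)). 1 \<le> a \<and> 1 \<le> b \<and> b \<le> 2 \<and> c \<le> n \<and> d \<le> 2
      \<and> a \<le> c \<and> b \<le> d \<and> a + b + 2 \<le> c + d}"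

lemma twon_noncov_rel: "noncov_rel (twon_set n) twon_lt = twon_noncov n"
proof (rule set_eqI, clarify)
  fix a b c d :: nat
  show "((a, b), (c, d)) \<in> noncov_rel (twon_set n) twon_lt \<longleftrightarrow> ((a, b), (c, d)) \<in> twon_noncov n"
  proof
    assume "((a, b), (c, d)) \<in> noncov_rel (twon_set n) twon_lt"
    then obtain z where "z \<in> twon_set n" "twon_lt (a, b) z" "twon_lt z (c, d)"
      "(a, b) \<in> twon_set n" "(c, d) \<in> twon_set n"
      unfolding noncov_rel_def by auto
    then show "((a, b), (c, d)) \<in> twon_noncov n"
      unfolding twon_noncov_def twon_set_def twon_lt_def by (cases z) auto
  next
    assume "((a, b), (c, d)) \<in> twon_noncov n"
    then have "(Suc a, b) \<in> twon_set n" "twon_lt (a, b) (Suc a, b)" "twon_lt (Suc a, b) (c, d)"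
      "(a, b) \<in> twon_set n" "(c, d) \<in> twon_set n" "twon_lt (a, b) (c, d)"
      unfolding twon_noncov_def twon_set_def twon_lt_def by auto
    then show "((a, b), (c, d)) \<in> noncov_rel (twon_set n) twon_lt"
      unfolding noncov_rel_def by blast
  qed
qed

lemma twon_covers_iff: "covers (twon_set n) twon_lt (a, b) (c, d) \<longleftrightarrow>
   1 \<le> a \<and> 1 \<le> b \<and> b \<le> 2 \<and> c \<le> n \<and> d \<le> 2 \<and> a \<le> c \<and> b \<le> d \<and> c + d = a + b + 1"
proof
  assume cov: "covers (twon_set n) twon_lt (a, b) (c, d)"
  then have "((a, b), (c, d)) \<notin> twon_noncov n"
    unfolding covers_def twon_noncov_rel[symmetric] noncov_rel_def by auto
  with cov show "1 \<le> a \<and> 1 \<le> b \<and> b \<le> 2 \<and> c \<le> n \<and> d \<le> 2 \<and> a \<le> c \<and> b \<le> d \<and> c + d = a + b + 1"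
    unfolding covers_def twon_noncov_def twon_set_def twon_lt_def by auto
next
  assume rank: "1 \<le> a \<and> 1 \<le> b \<and> b \<le> 2 \<and> c \<le> n \<and> d \<le> 2 \<and> a \<le> c \<and> b \<le> d \<and> c + d = a + b + 1"
  have "\<not> (twon_lt (a, b) z \<and> twon_lt z (c, d))" for z
    using rank unfolding twon_lt_def by (cases z) auto
  then show "covers (twon_set n) twon_lt (a, b) (c, d)"
    using rank unfolding covers_def twon_set_def twon_lt_def by auto
qed

text \<open>The rank c + d of the upper end dominates; the row b of the lower end breaks ties,
  since the only lower cover of (a + 1, b) besides (a, b) is (a + 1, 1), for b = 2.\<close>

definition twon_descent_measure :: "nat \<Rightarrow> (nat \<times> nat) \<times> (nat \<times> nat) \<Rightarrow> nat" where
  "twon_descent_measure n = (\<lambda>((a, b), (c, d)). 2 * (n + 3 - (c + d)) + (b - 1))"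

lemma twon_cover_descent: "cover_descent (twon_set n) twon_lt (twon_descent_measure n)"
  unfolding cover_descent_def
proof (intro allI impI)
  fix p q assume "(p, q) \<in> noncov_rel (twon_set n) twon_lt"
  then obtain a b c d where pq: "p = (a, b)" "q = (c, d)"
    and A: "1 \<le> a" "1 \<le> b" "b \<le> 2" "c \<le> n" "d \<le> 2" "a \<le> c" "b \<le> d" "a + b + 2 \<le> c + d"
    unfolding twon_noncov_rel twon_noncov_def by auto
  have lower: "x = (Suc a, 1) \<and> b = 2"
    if "covers (twon_set n) twon_lt x (Suc a, b)" "x \<noteq> (a, b)" for x
    using that A by (cases x) (auto simp: twon_covers_iff)
  have upper: "fst y + snd y = c + d + 1" if "covers (twon_set n) twon_lt (c, d) y" for y
    using that by (cases y) (auto simp: twon_covers_iff)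
  have "covers (twon_set n) twon_lt (a, b) (Suc a, b)" "twon_lt (Suc a, b) (c, d)"
    using A by (auto simp: twon_covers_iff twon_lt_def)
  then show "\<exists>a'. covers (twon_set n) twon_lt p a' \<and> twon_lt a' q
      \<and> (\<forall>x. covers (twon_set n) twon_lt x a' \<and> x \<noteq> p \<longrightarrow>
             twon_descent_measure n (x, q) < twon_descent_measure n (p, q))
      \<and> (\<forall>y. covers (twon_set n) twon_lt q y \<longrightarrow>
             twon_descent_measure n (a', y) < twon_descent_measure n (p, q))"
    unfolding pq using lower upper A
    by (intro exI[of _ "(Suc a, b)"]) (force simp: twon_descent_measure_def split: prod.splits)
qed

lemma breadth_twon:
  "breadth TYPE('k::field) (twon_set n) twon_lt = card (noncov_rel (twon_set n) twon_lt)"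
proof (rule breadth_eq_card_noncov_rel[OF _ _ twon_cover_descent])
  show "finite (twon_set n)"
    by (rule finite_subset[of _ "{1..n} \<times> {1..2}"]) (auto simp: twon_set_def)
  show "transp_on (twon_set n) twon_lt"
    by (auto simp: transp_on_def twon_lt_def prod_eq_iff)
qed

lemma twon_noncov_Suc: "twon_noncov (Suc n) = twon_noncov n
   \<union> ((\<lambda>i. ((i, 1), (Suc n, 1))) ` {1..n - 1} \<union> (\<lambda>i. ((i, 1), (Suc n, 2))) ` {1..n}
      \<union> (\<lambda>i. ((i, 2), (Suc n, 2))) ` {1..n - 1})"
  (is "_ = _ \<union> (?A \<union> ?B \<union> ?C)")
proof (rule set_eqI, clarify)
  fix a b c d :: nat
  show "((a, b), (c, d)) \<in> twon_noncov (Suc n) \<longleftrightarrow> ((a, b), (c, d)) \<in> twon_noncov n \<union> (?A \<union> ?B \<union> ?C)"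
  proof
    assume A: "((a, b), (c, d)) \<in> twon_noncov (Suc n)"
    show "((a, b), (c, d)) \<in> twon_noncov n \<union> (?A \<union> ?B \<union> ?C)"
    proof (cases "c \<le> n")
      case True
      then show ?thesis using A unfolding twon_noncov_def by auto
    next
      case False
      with A have "c = Suc n" "b = 1 \<and> d = 1 \<or> b = 1 \<and> d = 2 \<or> b = 2 \<and> d = 2"
        unfolding twon_noncov_def by auto
      then show ?thesis using A unfolding twon_noncov_def by (auto intro!: rev_image_eqI[of a])
    qed
  next
    assume "((a, b), (c, d)) \<in> twon_noncov n \<union> (?A \<union> ?B \<union> ?C)"
    then show "((a, b), (c, d)) \<in> twon_noncov (Suc n)" unfolding twon_noncov_def by auto
  qed
qed

lemma finite_twon_noncov: "finite (twon_noncov n)"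
  by (rule finite_subset[of _ "({..n} \<times> {..2}) \<times> ({..n} \<times> {..2})"])
    (auto simp: twon_noncov_def)

lemma card_twon_noncov_rel:
  assumes "n \<ge> 1"
  shows "real (card (noncov_rel (twon_set n) twon_lt)) = (real n - 1) * (3 * real n - 4) / 2"
  unfolding twon_noncov_rel using assms
proof (induction n rule: nat_induct_at_least)
  case base
  have "twon_noncov 1 = {}" unfolding twon_noncov_def by auto
  then show ?case by simp
next
  case (Suc n)
  let ?A = "(\<lambda>i. ((i, 1::nat), (Suc n, 1::nat))) ` {1..n - 1}"
  let ?B = "(\<lambda>i. ((i, 1::nat), (Suc n, 2::nat))) ` {1..n}"
  let ?C = "(\<lambda>i. ((i, 2::nat), (Suc n, 2::nat))) ` {1..n - 1}"
  have "card (twon_noncov (Suc n)) = card (twon_noncov n) + card (?A \<union> ?B \<union> ?C)"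
    unfolding twon_noncov_Suc
    by (rule card_Un_disjoint[OF finite_twon_noncov]) (auto simp: twon_noncov_def)
  also have "card (?A \<union> ?B \<union> ?C) = card ?A + card ?B + card ?C"
    by (subst card_Un_disjoint, simp, simp, force)+ simp
  also have "\<dots> = (n - 1) + n + (n - 1)"
    by (simp add: card_image inj_on_def)
  finally have "real (card (twon_noncov (Suc n))) = real (card (twon_noncov n)) + 3 * real n - 2"
    using Suc.hyps by (simp add: of_nat_diff)
  then show ?case using Suc.IH by (simp add: field_simps)
qed

section \<open>Complete m-ary trees\<close>

text \<open>The nodes of level l are numbered 1, ..., m^(l-1) from left to right, so the ancestor
  at level k of node j at level l has number (j - 1) div m^(l-k) + 1.\<close>

definition tree_ancestor :: "nat \<Rightarrow> nat \<Rightarrow> nat \<Rightarrow> nat \<Rightarrow> nat" where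
  "tree_ancestor m j l k = (j - 1) div m ^ (l - k) + 1"

lemma tree_ancestor_ancestor:
  assumes "k \<le> k'" "k' \<le> l"
  shows "tree_ancestor m (tree_ancestor m j l k') k' k = tree_ancestor m j l k"
proof -
  have pow: "m ^ (l - k') * m ^ (k' - k) = m ^ (l - k)"
    using assms by (simp flip: power_add)
  show ?thesis by (simp add: tree_ancestor_def div_mult2_eq flip: pow)
qed

lemma tree_ancestor_le:
  assumes "0 < m" "1 \<le> j" "j \<le> m ^ (l - 1)" "1 \<le> k" "k \<le> l"
  shows "tree_ancestor m j l k \<le> m ^ (k - 1)"
proof -
  have "m ^ (l - 1) = m ^ (k - 1) * m ^ (l - k)"
    using assms by (simp flip: power_add)
  with assms have "j - 1 < m ^ (k - 1) * m ^ (l - k)" by linarith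
  then have "(j - 1) div m ^ (l - k) < m ^ (k - 1)" by (rule less_mult_imp_div_less)
  then show ?thesis by (simp add: tree_ancestor_def)
qed

lemma tree_cover_iff:
  assumes "0 < m"
  shows "((i, k), (j, l)) \<in> tree_cover m n \<longleftrightarrow>
     1 \<le> k \<and> k < n \<and> l = Suc k \<and> 1 \<le> j \<and> j \<le> m ^ k \<and> i = tree_ancestor m j l k"
proof
  assume "((i, k), (j, l)) \<in> tree_cover m n"
  then have A: "1 \<le> k" "k < n" "l = Suc k" "1 \<le> i" "i \<le> m ^ (k - 1)"
    "m * (i - 1) + 1 \<le> j" "j \<le> m * i"
    unfolding tree_cover_def by auto
  have "m * i \<le> m * m ^ (k - 1)" using A by simp
  also have "m * m ^ (k - 1) = m ^ k" using A by (cases k) auto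
  finally have "j \<le> m ^ k" using A by linarith
  moreover have "(j - 1) div m = i - 1"
    using A by (intro div_nat_eqI) (auto simp: algebra_simps)
  ultimately show "1 \<le> k \<and> k < n \<and> l = Suc k \<and> 1 \<le> j \<and> j \<le> m ^ k \<and> i = tree_ancestor m j l k"
    using A by (simp add: tree_ancestor_def)
next
  assume A: "1 \<le> k \<and> k < n \<and> l = Suc k \<and> 1 \<le> j \<and> j \<le> m ^ k \<and> i = tree_ancestor m j l k"
  then have "i \<le> m ^ (k - 1)" using tree_ancestor_le[OF assms, of j l k] by simp
  moreover have "m * (i - 1) + 1 \<le> j \<and> j \<le> m * i"
  proof -
    define q where "q = (j - 1) div m"
    have i: "i = Suc q" using A by (simp add: tree_ancestor_def q_def)
    have "j - 1 = m * q + (j - 1) mod m" "(j - 1) mod m < m"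
      using assms by (simp_all add: q_def)
    then show ?thesis unfolding i using A by auto
  qed
  ultimately show "((i, k), (j, l)) \<in> tree_cover m n"
    unfolding tree_cover_def using A by (auto simp: tree_ancestor_def)
qed

lemma tree_cover_trancl_imp:
  assumes m: "0 < m" and "((i, k), (j, l)) \<in> (tree_cover m n)\<^sup>+"
  shows "1 \<le> k \<and> k < l \<and> l \<le> n \<and> 1 \<le> j \<and> j \<le> m ^ (l - 1) \<and> i = tree_ancestor m j l k"
  using assms(2)
proof (induction rule: trancl_induct2)
  case (base j l)
  then show ?case using tree_cover_iff[OF m] by auto
next
  case (step j' l' j l)
  then have "l' < n" "l = Suc l'" "1 \<le> j" "j \<le> m ^ l'" "j' = tree_ancestor m j l l'"
    using tree_cover_iff[OF m] by auto
  with step.IH show ?case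
    using tree_ancestor_ancestor[of k l' l m j] by auto
qed

lemma tree_ancestor_trancl:
  assumes m: "0 < m" and "k < l" "1 \<le> k" "l \<le> n" "1 \<le> j" "j \<le> m ^ (l - 1)"
  shows "((tree_ancestor m j l k, k), (j, l)) \<in> (tree_cover m n)\<^sup>+"
proof -
  from \<open>k < l\<close> have "Suc k \<le> l" by simp
  then show ?thesis
    using assms(3-)
  proof (induction l arbitrary: j rule: nat_induct_at_least)
    case base
    then show ?case using tree_cover_iff[OF m] by auto
  next
    case (Suc l)
    define j' where "j' = tree_ancestor m j (Suc l) l"
    have "1 \<le> j'" "j' \<le> m ^ (l - 1)"
      using tree_ancestor_le[OF m, of j "Suc l" l] Suc by (auto simp: j'_def tree_ancestor_def)
    then have "((tree_ancestor m j' l k, k), (j', l)) \<in> (tree_cover m n)\<^sup>+"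
      using Suc by simp
    moreover have "((j', l), (j, Suc l)) \<in> tree_cover m n"
      using Suc tree_cover_iff[OF m] by (auto simp: j'_def)
    moreover have "tree_ancestor m j' l k = tree_ancestor m j (Suc l) k"
      unfolding j'_def using Suc by (intro tree_ancestor_ancestor) auto
    ultimately show ?case by (metis trancl_into_trancl)
  qed
qed

lemma tree_lt_iff:
  assumes "0 < m"
  shows "tree_lt m n (i, k) (j, l) \<longleftrightarrow>
     1 \<le> k \<and> k < l \<and> l \<le> n \<and> 1 \<le> j \<and> j \<le> m ^ (l - 1) \<and> i = tree_ancestor m j l k"
  unfolding tree_lt_def using tree_cover_trancl_imp[OF assms] tree_ancestor_trancl[OF assms] by blast

lemma tree_lt_imp_mem:
  assumes m: "0 < m" and "tree_lt m n (i, k) (j, l)"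
  shows "(i, k) \<in> tree_set m n" "(j, l) \<in> tree_set m n"
proof -
  have A: "1 \<le> k" "k < l" "l \<le> n" "1 \<le> j" "j \<le> m ^ (l - 1)" "i = tree_ancestor m j l k"
    using assms(2) tree_lt_iff[OF m] by auto
  then have "i \<le> m ^ (k - 1)" using tree_ancestor_le[OF m] by simp
  then show "(i, k) \<in> tree_set m n" "(j, l) \<in> tree_set m n"
    using A by (auto simp: tree_set_def tree_ancestor_def)
qed

lemma tree_lt_through_ancestor:
  assumes m: "0 < m" and "tree_lt m n (i, k) (j, l)" "k < k'" "k' < l"
  shows "tree_lt m n (i, k) (tree_ancestor m j l k', k')"
    and "tree_lt m n (tree_ancestor m j l k', k') (j, l)"
proof -
  have A: "1 \<le> k" "l \<le> n" "1 \<le> j" "j \<le> m ^ (l - 1)" "i = tree_ancestor m j l k"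
    using assms(2) tree_lt_iff[OF m] by auto
  have "tree_ancestor m j l k' \<le> m ^ (k' - 1)"
    using A assms(3,4) by (intro tree_ancestor_le[OF m]) auto
  moreover have "tree_ancestor m (tree_ancestor m j l k') k' k = i"
    using A assms(3,4) by (simp add: tree_ancestor_ancestor)
  ultimately show "tree_lt m n (i, k) (tree_ancestor m j l k', k')"
    and "tree_lt m n (tree_ancestor m j l k', k') (j, l)"
    using A assms(3,4) by (auto simp: tree_lt_iff[OF m] tree_ancestor_def)
qed

definition tree_noncov :: "nat \<Rightarrow> nat \<Rightarrow> ((nat \<times> nat) \<times> (nat \<times> nat)) set" where
  "tree_noncov m n = {((i, k), (j, l)). 1 \<le> k \<and> k + 2 \<le> l \<and> l \<le> n \<and> 1 \<le> j \<and> j \<le> m ^ (l - 1)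
      \<and> i = tree_ancestor m j l k}"

lemma tree_noncov_rel:
  assumes m: "0 < m"
  shows "noncov_rel (tree_set m n) (tree_lt m n) = tree_noncov m n"
proof (rule set_eqI, clarify)
  fix i k j l :: nat
  show "((i, k), (j, l)) \<in> noncov_rel (tree_set m n) (tree_lt m n) \<longleftrightarrow> ((i, k), (j, l)) \<in> tree_noncov m n"
  proof
    assume "((i, k), (j, l)) \<in> noncov_rel (tree_set m n) (tree_lt m n)"
    then obtain z1 z2 where "tree_lt m n (i, k) (j, l)" "tree_lt m n (i, k) (z1, z2)" "tree_lt m n (z1, z2) (j, l)"
      unfolding noncov_rel_def by auto
    then show "((i, k), (j, l)) \<in> tree_noncov m n"
      unfolding tree_noncov_def tree_lt_iff[OF m] by auto
  next
    assume A: "((i, k), (j, l)) \<in> tree_noncov m n"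
    then have lt: "tree_lt m n (i, k) (j, l)" and "Suc k < l"
      unfolding tree_noncov_def tree_lt_iff[OF m] by auto
    note between = tree_lt_through_ancestor[OF m lt lessI this(2)]
    show "((i, k), (j, l)) \<in> noncov_rel (tree_set m n) (tree_lt m n)"
      using between tree_lt_imp_mem[OF m lt] tree_lt_imp_mem(2)[OF m between(1)] lt
      unfolding noncov_rel_def by blast
  qed
qed

lemma tree_covers_iff:
  assumes m: "0 < m"
  shows "covers (tree_set m n) (tree_lt m n) (i, k) (j, l) \<longleftrightarrow> tree_lt m n (i, k) (j, l) \<and> l = Suc k"
proof
  assume cov: "covers (tree_set m n) (tree_lt m n) (i, k) (j, l)"
  then have lt: "tree_lt m n (i, k) (j, l)" unfolding covers_def by auto
  then have "k < l" using tree_lt_iff[OF m] by auto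
  moreover have "\<not> Suc k < l"
  proof
    assume "Suc k < l"
    note between = tree_lt_through_ancestor[OF m lt _ this]
    then show False
      using tree_lt_imp_mem(2)[OF m between(1)] cov unfolding covers_def by blast
  qed
  ultimately show "tree_lt m n (i, k) (j, l) \<and> l = Suc k" using lt by auto
next
  assume A: "tree_lt m n (i, k) (j, l) \<and> l = Suc k"
  have "\<not> (tree_lt m n (i, k) z \<and> tree_lt m n z (j, l))" for z
    using A by (cases z) (auto simp: tree_lt_iff[OF m])
  then show "covers (tree_set m n) (tree_lt m n) (i, k) (j, l)"
    using A tree_lt_imp_mem[OF m] unfolding covers_def by blast
qed

lemma tree_cover_descent:
  assumes m: "0 < m"
  shows "cover_descent (tree_set m n) (tree_lt m n) (\<lambda>(p, q). n - snd q)"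
proof (rule cover_descent_unique_lower_cover)
  fix p q assume "(p, q) \<in> noncov_rel (tree_set m n) (tree_lt m n)"
  then obtain i k j l where pq: "p = (i, k)" "q = (j, l)"
    and lt: "tree_lt m n (i, k) (j, l)" and "Suc k < l"
    unfolding tree_noncov_rel[OF m] tree_noncov_def tree_lt_iff[OF m] by auto
  define a where "a = (tree_ancestor m j l (Suc k), Suc k)"
  note between = tree_lt_through_ancestor[OF m lt lessI \<open>Suc k < l\<close>, folded a_def]
  have "covers (tree_set m n) (tree_lt m n) (i, k) a"
    using between(1) by (simp add: a_def tree_covers_iff[OF m])
  moreover have "c = (i, k)" if "covers (tree_set m n) (tree_lt m n) c a" for c
    using that between(1) by (cases c) (auto simp: a_def tree_covers_iff[OF m] tree_lt_iff[OF m])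
  ultimately show "\<exists>a. covers (tree_set m n) (tree_lt m n) p a \<and> tree_lt m n a q
      \<and> (\<forall>c. covers (tree_set m n) (tree_lt m n) c a \<longrightarrow> c = p)"
    unfolding pq using between(2) by blast
next
  fix q d assume "covers (tree_set m n) (tree_lt m n) q d"
  then show "snd q < snd d \<and> snd d \<le> n"
    by (cases q, cases d) (auto simp: tree_covers_iff[OF m] tree_lt_iff[OF m])
qed

lemma breadth_tree:
  assumes "0 < m"
  shows "breadth TYPE('k::field) (tree_set m n) (tree_lt m n) = card (noncov_rel (tree_set m n) (tree_lt m n))"
proof (rule breadth_eq_card_noncov_rel[OF _ _ tree_cover_descent[OF assms]])
  show "finite (tree_set m n)"
    by (rule finite_subset[of _ "\<Union>k\<in>{1..n}. {1..m ^ (k - 1)} \<times> {k}"]) (auto simp: tree_set_def)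
  show "transp_on (tree_set m n) (tree_lt m n)"
    unfolding transp_on_def tree_lt_def by (meson trancl_trans)
qed

lemma tree_noncov_Suc: "tree_noncov m (Suc n) = tree_noncov m n
   \<union> (\<lambda>(j, k). ((tree_ancestor m j (Suc n) k, k), (j, Suc n))) ` ({1..m ^ n} \<times> {1..n - 1})"
  (is "_ = _ \<union> ?new")
proof (rule set_eqI, clarify)
  fix i k j l :: nat
  show "((i, k), (j, l)) \<in> tree_noncov m (Suc n) \<longleftrightarrow> ((i, k), (j, l)) \<in> tree_noncov m n \<union> ?new"
  proof
    assume A: "((i, k), (j, l)) \<in> tree_noncov m (Suc n)"
    show "((i, k), (j, l)) \<in> tree_noncov m n \<union> ?new"
    proof (cases "l \<le> n")
      case True
      then show ?thesis using A unfolding tree_noncov_def by auto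
    next
      case False
      with A have "l = Suc n" unfolding tree_noncov_def by auto
      with A have "(j, k) \<in> {1..m ^ n} \<times> {1..n - 1}"
        "((i, k), (j, l)) = ((tree_ancestor m j (Suc n) k, k), (j, Suc n))"
        unfolding tree_noncov_def by auto
      then show ?thesis by (intro UnI2 image_eqI[of _ _ "(j, k)"]) simp_all
    qed
  next
    assume "((i, k), (j, l)) \<in> tree_noncov m n \<union> ?new"
    then show "((i, k), (j, l)) \<in> tree_noncov m (Suc n)" unfolding tree_noncov_def by auto
  qed
qed

lemma finite_tree_noncov: "finite (tree_noncov m n)"
proof (induction n)
  case 0
  have "tree_noncov m 0 = {}" unfolding tree_noncov_def by auto
  then show ?case by simp
next
  case (Suc n)
  then show ?case unfolding tree_noncov_Suc by simp
qed

lemma card_tree_noncov_Suc: "card (tree_noncov m (Suc n)) = card (tree_noncov m n) + m ^ n * (n - 1)"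
proof -
  let ?f = "\<lambda>(j, k). ((tree_ancestor m j (Suc n) k, k), (j, Suc n))"
  have "card (tree_noncov m (Suc n)) = card (tree_noncov m n) + card (?f ` ({1..m ^ n} \<times> {1..n - 1}))"
    unfolding tree_noncov_Suc
    by (rule card_Un_disjoint[OF finite_tree_noncov]) (auto simp: tree_noncov_def)
  also have "card (?f ` ({1..m ^ n} \<times> {1..n - 1})) = m ^ n * (n - 1)"
    by (subst card_image) (auto simp: inj_on_def card_cartesian_product)
  finally show ?thesis .
qed

lemma card_tree_noncov:
  assumes m: "2 \<le> m" and n: "1 \<le> n"
  shows "real (card (tree_noncov m n))
    = ((real n - 2) * real m ^ (n + 1) + (1 - real n) * real m ^ n + real m ^ 2) / (real m - 1) ^ 2"
  using n
proof (induction n rule: nat_induct_at_least)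
  case base
  have "tree_noncov m 1 = {}" unfolding tree_noncov_def by auto
  then show ?case by (simp add: power2_eq_square)
next
  case (Suc n)
  have "(real m - 1) ^ 2 \<noteq> 0" using m by simp
  have "real (card (tree_noncov m (Suc n))) = real (card (tree_noncov m n)) + real m ^ n * (real n - 1)"
    unfolding card_tree_noncov_Suc using Suc.hyps by (simp add: of_nat_diff)
  also have "\<dots> = ((real (Suc n) - 2) * real m ^ (Suc n + 1) + (1 - real (Suc n)) * real m ^ Suc n
      + real m ^ 2) / (real m - 1) ^ 2"
    unfolding Suc.IH using \<open>(real m - 1) ^ 2 \<noteq> 0\<close> by (simp add: field_simps power2_eq_square)
  finally show ?case .
qed

theorem theorem2:
  fixes n m :: nat
  assumes "alg_closed TYPE('k::field_char_0)"
  shows "(n \<ge> 1 \<longrightarrow>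
            breadth TYPE('k) (chain_set n) chain_lt = card (noncov_rel (chain_set n) chain_lt)
          \<and> real (card (noncov_rel (chain_set n) chain_lt)) = (real n - 1) * (real n - 2) / 2)
       \<and> (n \<ge> 1 \<longrightarrow>
            breadth TYPE('k) (twon_set n) twon_lt = card (noncov_rel (twon_set n) twon_lt)
          \<and> real (card (noncov_rel (twon_set n) twon_lt)) = (real n - 1) * (3 * real n - 4) / 2)
       \<and> (m \<ge> 2 \<and> n \<ge> 1 \<longrightarrow>
            breadth TYPE('k) (tree_set m n) (tree_lt m n) = card (noncov_rel (tree_set m n) (tree_lt m n))
          \<and> real (card (noncov_rel (tree_set m n) (tree_lt m n)))
              = ((real n - 2) * real m ^ (n + 1) + (1 - real n) * real m ^ n + real m ^ 2) / (real m - 1) ^ 2)"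
  using breadth_chain[where 'k = 'k] card_chain_noncov_rel
    breadth_twon[where 'k = 'k] card_twon_noncov_rel
    breadth_tree[where 'k = 'k] card_tree_noncov tree_noncov_rel
  by auto

end
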